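(* For the invertible $N$-component coupled Harry Dym hierarchy (defined in the context), the vector fields $K_i$ and the one-forms $\gamma_i$ are local for all integers $i\ge0$.
   Context: Let $N\ge1$, $\partial=\partial/\partial x$, $\partial^{-1}$ a formal inverse of $\partial$. Let $u_1,\dots,u_N$ be smooth functions of $(x,t)$ (the fields), set $u_0=0$, and let $\varepsilon_0\neq0,\varepsilon_1,\dots,\varepsilon_{N-1}$ be real constants with $\varepsilon_N=0$. Put $J_i=\frac14\varepsilon_i\partial^3+\frac12(u_i\partial+\partial u_i)$, so $J_0=\frac14\varepsilon_0\partial^3$ and $J_N=\frac12(u_N\partial+\partial u_N)=u_N^{1/2}\partial u_N^{1/2}$, both invertible ($J_N^{-1}=u_N^{-1/2}\partial^{-1}u_N^{-1/2}$). Formal adjoint: $\partial^\dagger=-\partial$, multiplication operators self-adjoint, $(AB)^\dagger=B^\dagger A^\dagger$, transpose for matrices. Let $B_0$ be the $N\times N$ matrix with $(B_0)_{ij}=-J_{i+j-1}$ if $i+j-1\le N$ and $0$ otherwise, and $R$ the $N\times N$ matrix with $R_{ij}=\delta_{i,j+1}$ ($1\le j\le N-1$), $R_{iN}=-J_{i-1}J_N^{-1}$; $R$ is invertible, and $B_r:=R^rB_0$ ($r\in\mathbf Z$). One-forms: $\gamma_0=(0,\dots,0,u_N^{-1/2})^T$, $\gamma_{-1}=(-2,0,\dots,0)^T$, $\gamma_s=(R^\dagger)^s\gamma_0$, $\gamma_{-s}=((R^{-1})^\dagger)^{s-1}\gamma_{-1}$ ($s\ge1$). Vector fields (the flows $u_{t_s}=K_s$):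 $K_{-s}:=B_r\gamma_{-r-s}$ ($s\ge1$, any $r>-s$) and $K_s:=B_r\gamma_{-r+s+N}$ ($s\ge0$, any $r\le s+N$), independent of $r$; in particular $K_s=B_N\gamma_s=B_0\gamma_{s+N}$, $K_s=R^sK_0$. A vector field or one-form is local if each component is a function of $u_1,\dots,u_N$ and finitely many of their $x$-derivatives (no $\partial^{-1}$ appears). *)

theory Defs
  imports "HOL-Analysis.Analysis"
begin

text \<open>Fields: u :: nat => real => real, u j the j-th field (as a function of x;
  the time variable plays no role for locality). A jet is the list of all
  x-derivatives of all fields at a point: j k |-> u_j^(k)(x).\<close>

type_synonym jet = "nat \<Rightarrow> nat \<Rightarrow> real"

definition smooth_fun :: "(real \<Rightarrow> real) \<Rightarrow> bool" where
  "smooth_fun f \<longleftrightarrow> (\<forall>k x. (deriv ^^ k) f differentiable (at x))"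

definition jet_of :: "(nat \<Rightarrow> real \<Rightarrow> real) \<Rightarrow> real \<Rightarrow> jet" where
  "jet_of u x = (\<lambda>j k. (deriv ^^ k) (u j) x)"

definition ev :: "(jet \<Rightarrow> real) \<Rightarrow> (nat \<Rightarrow> real \<Rightarrow> real) \<Rightarrow> real \<Rightarrow> real" where
  "ev F u = (\<lambda>x. F (jet_of u x))"

definition is_local :: "nat \<Rightarrow> (jet \<Rightarrow> real) \<Rightarrow> bool" where
  "is_local N F \<longleftrightarrow>
     (\<exists>m. \<forall>a b. (\<forall>j\<in>{1..N}. \<forall>k\<le>m. a j k = b j k) \<longrightarrow> F a = F b)"

text \<open>Admissible field configurations: u_0 = 0, u_1..u_N smooth, u_N > 0
  (so that u_N^(1/2), u_N^(-1/2) make sense).\<close>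
definition admissible :: "nat \<Rightarrow> (nat \<Rightarrow> real \<Rightarrow> real) \<Rightarrow> bool" where
  "admissible N u \<longleftrightarrow> u 0 = (\<lambda>x. 0) \<and> (\<forall>j\<in>{1..N}. smooth_fun (u j)) \<and> (\<forall>x. 0 < u N x)"

definition local_field :: "nat \<Rightarrow> (nat \<Rightarrow> jet \<Rightarrow> real) \<Rightarrow> bool" where
  "local_field N G \<longleftrightarrow>
     (\<forall>i\<in>{1..N}. is_local N (G i) \<and> (\<forall>u. admissible N u \<longrightarrow> smooth_fun (ev (G i) u)))"

definition Jop :: "(nat \<Rightarrow> real) \<Rightarrow> (nat \<Rightarrow> real \<Rightarrow> real) \<Rightarrow> nat \<Rightarrow> (real \<Rightarrow> real) \<Rightarrow> real \<Rightarrow> real" where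
  "Jop eps u i f = (\<lambda>x. eps i / 4 * (deriv ^^ 3) f x
                         + (u i x * deriv f x + deriv (\<lambda>y. u i y * f y) x) / 2)"

text \<open>The one-forms gamma_s (s >= 0): gamma_0 = (0,..,0,u_N^(-1/2)) and
  gamma_(s+1) = R^dagger gamma_s, i.e. (gamma_(s+1))_j = (gamma_s)_(j+1) for j<N and
  J_N (gamma_(s+1))_N = - sum_(i=1..N) J_(i-1) (gamma_s)_i
  (this is how the formal inverse J_N^(-1) in R^dagger is realised).\<close>
definition gamma_chain :: "nat \<Rightarrow> (nat \<Rightarrow> real) \<Rightarrow> (nat \<Rightarrow> nat \<Rightarrow> jet \<Rightarrow> real) \<Rightarrow> bool" where
  "gamma_chain N eps \<Gamma> \<longleftrightarrow>
    (\<forall>u. admissible N u \<longrightarrow>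
      (\<forall>i\<in>{1..N}. ev (\<Gamma> 0 i) u = (\<lambda>x. if i = N then 1 / sqrt (u N x) else 0)) \<and>
      (\<forall>s. (\<forall>j\<in>{1..<N}. ev (\<Gamma> (Suc s) j) u = ev (\<Gamma> s (Suc j)) u) \<and>
           Jop eps u N (ev (\<Gamma> (Suc s) N) u) =
             (\<lambda>x. - (\<Sum>i=1..N. Jop eps u (i - 1) (ev (\<Gamma> s i) u) x))))"

text \<open>The vector fields K_s (s >= 0): K_s = B_0 gamma_(s+N), where
  (B_0 g)_i = - sum_(j=1..N+1-i) J_(i+j-1) g_j; and also K_(s+1) = R K_s, where
  (R K)_i = [i>=2] K_(i-1) - J_(i-1) J_N^(-1) K_N (with some choice of J_N^(-1) K_N).\<close>
definition K_chain :: "nat \<Rightarrow> (nat \<Rightarrow> real) \<Rightarrow> (nat \<Rightarrow> nat \<Rightarrow> jet \<Rightarrow> real)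
                        \<Rightarrow> (nat \<Rightarrow> nat \<Rightarrow> jet \<Rightarrow> real) \<Rightarrow> bool" where
  "K_chain N eps \<Gamma> K \<longleftrightarrow>
    (\<forall>u. admissible N u \<longrightarrow>
      (\<forall>s. \<forall>i\<in>{1..N}. ev (K s i) u =
          (\<lambda>x. - (\<Sum>j=1..N + 1 - i. Jop eps u (i + j - 1) (ev (\<Gamma> (s + N) j) u) x))) \<and>
      (\<forall>s. \<exists>w. smooth_fun w \<and> Jop eps u N w = ev (K s N) u \<and>
          (\<forall>i\<in>{1..N}. ev (K (Suc s) i) u =
             (\<lambda>x. (if 2 \<le> i then ev (K s (i - 1)) u x else 0) - Jop eps u (i - 1) w x))))"

end

theory Submission
  imports Defs
begin

text \<open>Put J(\<lambda>) = \<Sum>_a \<lambda>^a J_(N-a). All one-forms are windows (\<gamma>_s)_i = g_(s+i-1) of one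
  sequence with g_n = 0 for n < N - 1 and g_(N-1+n) = \<psi>_n, where the series \<psi>(\<lambda>) = \<Sum>_n \<lambda>^n \<psi>_n
  with \<psi>_0 = u_N^(-1/2) solves J(\<lambda>) \<psi>(\<lambda>) = 0; this is the recursion given by R^\<dagger>.
  Instead of inverting J_N, use that \<psi> J_i \<psi> is the x-derivative of a quadratic density
  H_i(\<psi>, \<psi>) and impose H(\<lambda>)(\<psi>, \<psi>) = 1/2. Because \<epsilon>_N = 0, the \<lambda>^n-coefficient of this
  equation contains \<psi>_n only through u_N \<psi>_0 \<psi>_n = u_N^(1/2) \<psi>_n, so it determines \<psi>_n as a
  differential polynomial in u and u_N^(-1/2). Differentiating it gives \<psi>(\<lambda>) J(\<lambda>) \<psi>(\<lambda>) = 0,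
  and as \<psi>_0 \<noteq> 0 the series J(\<lambda>) \<psi>(\<lambda>) vanishes. Then K_s = B_0 \<gamma>_(s+N) is local as well,
  and J_N^(-1) (K_s)_N = -(\<gamma>_(s+N))_N exhibits K_(s+1) = R K_s.\<close>

text \<open>Differential polynomials: DVar j k stands for the k-th x-derivative of u_j, and DInvSqrt
  for u_N^(-1/2).\<close>

datatype dpoly =
    DConst real
  | DVar nat nat
  | DInvSqrt
  | DAdd dpoly dpoly
  | DMul dpoly dpoly
  | DSum nat "nat \<Rightarrow> dpoly"

primrec dp_order :: "dpoly \<Rightarrow> nat" where
  "dp_order (DConst c) = 0"
| "dp_order (DVar j k) = k"
| "dp_order DInvSqrt = 0"
| "dp_order (DAdd p q) = max (dp_order p) (dp_order q)"
| "dp_order (DMul p q) = max (dp_order p) (dp_order q)"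
| "dp_order (DSum n p) = (\<Sum>i<n. dp_order (p i))"

lemma sum_antidiagonal_swap:
  fixes g :: "nat \<Rightarrow> nat \<Rightarrow> 'a::comm_monoid_add"
  shows "(\<Sum>b\<le>m. g (m - b) b) = (\<Sum>b\<le>m. g b (m - b))"
  by (rule sum.reindex_bij_witness[where i="\<lambda>b. m - b" and j="\<lambda>b. m - b"]) auto

lemma sum_antidiagonal_antisym:
  fixes g :: "nat \<Rightarrow> nat \<Rightarrow> 'a::ab_group_add"
  shows "(\<Sum>b\<le>m. g b (m - b) - g (m - b) b) = 0"
  by (simp add: sum_subtractf sum_antidiagonal_swap)

lemma sum_triangle_swap:
  fixes f :: "nat \<Rightarrow> nat \<Rightarrow> 'a::comm_monoid_add"
  shows "(\<Sum>a\<le>n. \<Sum>b\<le>n - a. f a b) = (\<Sum>b\<le>n. \<Sum>a\<le>n - b. f a b)"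
proof -
  have "(\<Sum>a\<le>n. \<Sum>b\<le>n - a. f a b) = (\<Sum>a\<le>n. \<Sum>b\<le>n. if a + b \<le> n then f a b else 0)"
    by (intro sum.cong refl sum.mono_neutral_cong_left) auto
  also have "\<dots> = (\<Sum>b\<le>n. \<Sum>a\<le>n. if a + b \<le> n then f a b else 0)"
    by (rule sum.swap)
  also have "\<dots> = (\<Sum>b\<le>n. \<Sum>a\<le>n - b. f a b)"
    by (intro sum.cong refl sum.mono_neutral_cong_right) auto
  finally show ?thesis .
qed

lemma convolution_eq_0_imp_eq_0:
  fixes k F :: "nat \<Rightarrow> 'a::idom"
  assumes k0: "k 0 \<noteq> 0" and conv: "\<And>n. (\<Sum>b\<le>n. k b * F (n - b)) = 0"
  shows "F n = 0"
proof (induct n rule: less_induct)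
  case (less n)
  have "(\<Sum>b\<le>n. k b * F (n - b)) = k 0 * F n + (\<Sum>b\<in>{1..n}. k b * F (n - b))"
    by (simp add: atMost_atLeast0 sum.atLeast_Suc_atMost)
  also have "(\<Sum>b\<in>{1..n}. k b * F (n - b)) = 0"
    using less by (intro sum.neutral) auto
  finally show ?case
    using conv[of n] k0 by simp
qed

locale field_jets =
  fixes N :: nat
  assumes N_pos: "1 \<le> N"
begin

primrec dp_eval :: "dpoly \<Rightarrow> jet \<Rightarrow> real" where
  "dp_eval (DConst c) a = c"
| "dp_eval (DVar j k) a = a j k"
| "dp_eval DInvSqrt a = 1 / sqrt (a N 0)"
| "dp_eval (DAdd p q) a = dp_eval p a + dp_eval q a"
| "dp_eval (DMul p q) a = dp_eval p a * dp_eval q a"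
| "dp_eval (DSum n p) a = (\<Sum>i<n. dp_eval (p i) a)"

primrec dp_deriv :: "dpoly \<Rightarrow> dpoly" where
  "dp_deriv (DConst c) = DConst 0"
| "dp_deriv (DVar j k) = DVar j (Suc k)"
| "dp_deriv DInvSqrt = DMul (DConst (-1/2)) (DMul (DVar N 1) (DMul DInvSqrt (DMul DInvSqrt DInvSqrt)))"
| "dp_deriv (DAdd p q) = DAdd (dp_deriv p) (dp_deriv q)"
| "dp_deriv (DMul p q) = DAdd (DMul (dp_deriv p) q) (DMul p (dp_deriv q))"
| "dp_deriv (DSum n p) = DSum n (\<lambda>i. dp_deriv (p i))"

primrec dp_wf :: "dpoly \<Rightarrow> bool" where
  "dp_wf (DConst c) = True"
| "dp_wf (DVar j k) = (j \<in> {1..N})"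
| "dp_wf DInvSqrt = True"
| "dp_wf (DAdd p q) = (dp_wf p \<and> dp_wf q)"
| "dp_wf (DMul p q) = (dp_wf p \<and> dp_wf q)"
| "dp_wf (DSum n p) = (\<forall>i<n. dp_wf (p i))"

lemma dp_wf_deriv [simp]: "dp_wf p \<Longrightarrow> dp_wf (dp_deriv p)"
  using N_pos by (induct p) auto

lemma dp_eval_cong:
  assumes "dp_wf p" and "\<forall>j\<in>{1..N}. \<forall>k\<le>dp_order p. a j k = b j k"
  shows "dp_eval p a = dp_eval p b"
  using assms
proof (induct p)
  case (DSum n p)
  have "dp_eval (p i) a = dp_eval (p i) b" if "i < n" for i
  proof (rule DSum.hyps)
    have "dp_order (p i) \<le> (\<Sum>i<n. dp_order (p i))"
      using that by (intro member_le_sum) auto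
    then show "\<forall>j\<in>{1..N}. \<forall>k\<le>dp_order (p i). a j k = b j k"
      using DSum.prems(2) by force
  qed (use DSum.prems(1) that in auto)
  then show ?case by simp
qed (use N_pos in auto)

lemma is_local_dp_eval: "dp_wf p \<Longrightarrow> is_local N (dp_eval p)"
  unfolding is_local_def using dp_eval_cong by blast

definition dp_fun :: "(nat \<Rightarrow> real \<Rightarrow> real) \<Rightarrow> dpoly \<Rightarrow> real \<Rightarrow> real" where
  "dp_fun u p = ev (dp_eval p) u"

lemma dp_fun_simps [simp]:
  "dp_fun u (DConst c) = (\<lambda>x. c)"
  "dp_fun u (DAdd p q) = (\<lambda>x. dp_fun u p x + dp_fun u q x)"
  "dp_fun u (DMul p q) = (\<lambda>x. dp_fun u p x * dp_fun u q x)"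
  "dp_fun u (DSum n r) = (\<lambda>x. \<Sum>i<n. dp_fun u (r i) x)"
  by (simp_all add: dp_fun_def ev_def)

lemma dp_fun_InvSqrt: "dp_fun u DInvSqrt = (\<lambda>x. 1 / sqrt (u N x))"
  by (simp add: dp_fun_def ev_def jet_of_def)

lemma admissible_smooth: "admissible N u \<Longrightarrow> j \<in> {1..N} \<Longrightarrow> smooth_fun (u j)"
  by (simp add: admissible_def)

lemma has_real_derivative_dp_fun:
  assumes adm: "admissible N u"
  shows "dp_wf p \<Longrightarrow> (dp_fun u p has_real_derivative dp_fun u (dp_deriv p) x) (at x)"
proof (induct p arbitrary: x)
  case (DConst c)
  show ?case by simp
next
  case (DVar j k)
  then have "(deriv ^^ k) (u j) differentiable (at x)"
    using admissible_smooth[OF adm] unfolding smooth_fun_def by auto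
  then show ?case
    by (simp add: dp_fun_def ev_def jet_of_def DERIV_deriv_iff_real_differentiable)
next
  case DInvSqrt
  have pos: "0 < u N x" using adm by (simp add: admissible_def)
  have "smooth_fun (u N)"
    using admissible_smooth[OF adm, of N] N_pos by simp
  then have "(deriv ^^ 0) (u N) differentiable (at x)"
    unfolding smooth_fun_def by blast
  then have "(u N has_real_derivative deriv (u N) x) (at x)"
    by (simp add: DERIV_deriv_iff_real_differentiable)
  with DERIV_real_sqrt[OF pos]
  have "((\<lambda>x. sqrt (u N x)) has_real_derivative inverse (sqrt (u N x)) / 2 * deriv (u N) x) (at x)"
    by (rule DERIV_chain2)
  from DERIV_inverse'[OF this] pos
  have "((\<lambda>x. inverse (sqrt (u N x))) has_real_derivative
      - (inverse (sqrt (u N x)) * (inverse (sqrt (u N x)) / 2 * deriv (u N) x) * inverse (sqrt (u N x)))) (at x)"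
    by simp
  moreover have "- (inverse r * (inverse r / 2 * d) * inverse r) = -1/2 * (d * (1/r * (1/r * (1/r))))"
    for r d :: real
    by (simp only: divide_inverse mult_1_left) (simp only: mult_ac mult_minus_left mult_minus_right)
  then have "- (inverse (sqrt (u N x)) * (inverse (sqrt (u N x)) / 2 * deriv (u N) x) * inverse (sqrt (u N x)))
      = dp_fun u (dp_deriv DInvSqrt) x"
    by (simp add: dp_fun_def ev_def jet_of_def)
  ultimately show ?case
    by (simp only: dp_fun_InvSqrt divide_inverse mult_1_left)
next
  case (DAdd p q)
  then have "(dp_fun u p has_real_derivative dp_fun u (dp_deriv p) x) (at x)"
    and "(dp_fun u q has_real_derivative dp_fun u (dp_deriv q) x) (at x)"
    by simp_all
  from DERIV_add[OF this] show ?case by simp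
next
  case (DMul p q)
  then have "(dp_fun u p has_real_derivative dp_fun u (dp_deriv p) x) (at x)"
    and "(dp_fun u q has_real_derivative dp_fun u (dp_deriv q) x) (at x)"
    by simp_all
  from DERIV_mult[OF this] show ?case by (simp add: add.commute mult.commute)
next
  case (DSum n p)
  then have "(dp_fun u (p i) has_real_derivative dp_fun u (dp_deriv (p i)) x) (at x)" if "i \<in> {..<n}" for i
    using that by simp
  then show ?case
    unfolding dp_fun_simps dp_deriv.simps by (rule DERIV_sum)
qed

lemma deriv_dp_fun: "admissible N u \<Longrightarrow> dp_wf p \<Longrightarrow> deriv (dp_fun u p) = dp_fun u (dp_deriv p)"
  by (intro ext DERIV_imp_deriv has_real_derivative_dp_fun)

lemma smooth_dp_fun:
  assumes adm: "admissible N u" and "dp_wf p"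
  shows "smooth_fun (dp_fun u p)"
proof -
  have "(deriv ^^ k) (dp_fun u p) = dp_fun u ((dp_deriv ^^ k) p) \<and> dp_wf ((dp_deriv ^^ k) p)" for k
    by (induct k) (simp_all add: assms deriv_dp_fun[OF adm])
  then show ?thesis
    unfolding smooth_fun_def
    using has_real_derivative_dp_fun[OF adm] real_differentiable_def by metis
qed

lemma local_field_dp_eval: "(\<And>i. dp_wf (p i)) \<Longrightarrow> local_field N (\<lambda>i. dp_eval (p i))"
  using smooth_dp_fun is_local_dp_eval by (simp add: local_field_def dp_fun_def)

text \<open>dp_field 0 = 0 matches u_0 = 0; with truncated subtraction, dp_field (N - a) therefore
  vanishes for all a \<ge> N.\<close>

definition dp_field :: "nat \<Rightarrow> dpoly" where
  "dp_field i = (if i \<in> {1..N} then DVar i 0 else DConst 0)"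

lemma dp_wf_field [simp]: "dp_wf (dp_field i)"
  by (simp add: dp_field_def)

lemma dp_fun_field: "admissible N u \<Longrightarrow> i \<le> N \<Longrightarrow> dp_fun u (dp_field i) = u i"
  by (cases "i = 0") (auto simp: dp_field_def admissible_def dp_fun_def ev_def jet_of_def)

text \<open>J_i is dp_J (eps i) i; the coefficient is a separate argument so that the zero operator
  dp_J 0 0 can play the role of J_(N-a) for a > N.\<close>

definition dp_J :: "real \<Rightarrow> nat \<Rightarrow> dpoly \<Rightarrow> dpoly" where
  "dp_J c i p = DAdd (DMul (DConst (c / 4)) (dp_deriv (dp_deriv (dp_deriv p))))
     (DMul (DConst (1/2)) (DAdd (DMul (dp_field i) (dp_deriv p)) (dp_deriv (DMul (dp_field i) p))))"

lemma dp_wf_J [simp]: "dp_wf p \<Longrightarrow> dp_wf (dp_J c i p)"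
  by (simp add: dp_J_def)

lemma dp_eval_J:
  "dp_eval (dp_J c i p) a = c / 4 * dp_eval (dp_deriv (dp_deriv (dp_deriv p))) a
     + 1/2 * dp_eval (dp_deriv (dp_field i)) a * dp_eval p a + dp_eval (dp_field i) a * dp_eval (dp_deriv p) a"
  by (simp add: dp_J_def algebra_simps)

lemma Jop_dp_fun:
  assumes adm: "admissible N u" and "i \<le> N" and p: "dp_wf p"
  shows "Jop eps u i (dp_fun u p) = dp_fun u (dp_J (eps i) i p)"
proof -
  have ui: "u i = dp_fun u (dp_field i)"
    using dp_fun_field[OF adm \<open>i \<le> N\<close>] by simp
  have "(deriv ^^ 3) (dp_fun u p) = dp_fun u (dp_deriv (dp_deriv (dp_deriv p)))"
    using p by (simp add: eval_nat_numeral deriv_dp_fun[OF adm])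
  moreover have "deriv (\<lambda>y. u i y * dp_fun u p y) = dp_fun u (dp_deriv (DMul (dp_field i) p))"
  proof -
    have "(\<lambda>y. u i y * dp_fun u p y) = dp_fun u (DMul (dp_field i) p)"
      by (simp add: ui)
    then show ?thesis
      using p by (simp only: deriv_dp_fun[OF adm] dp_wf.simps dp_wf_field)
  qed
  ultimately show ?thesis
    using p by (simp add: Jop_def dp_J_def deriv_dp_fun[OF adm] ui)
qed

end

locale harry_dym = field_jets +
  fixes eps :: "nat \<Rightarrow> real"
  assumes eps_N: "eps N = 0"
begin

definition eps_rev :: "nat \<Rightarrow> real" where
  "eps_rev a = (if a \<le> N then eps (N - a) else 0)"

text \<open>The x-derivative of dp_density a p q is p J_(N-a) q up to terms antisymmetric in p, q;
  dp_quad n f and dp_Jpsi f n are the \<lambda>^n-coefficients of H(\<lambda>)(f(\<lambda>), f(\<lambda>)) and of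
  J(\<lambda>) f(\<lambda>), where f(\<lambda>) = \<Sum>_n \<lambda>^n f n.\<close>

definition dp_density :: "nat \<Rightarrow> dpoly \<Rightarrow> dpoly \<Rightarrow> dpoly" where
  "dp_density a p q =
     DAdd (DMul (DConst (eps_rev a / 4))
             (DAdd (DMul p (dp_deriv (dp_deriv q))) (DMul (DConst (-1/2)) (DMul (dp_deriv p) (dp_deriv q)))))
          (DMul (DConst (1/2)) (DMul (dp_field (N - a)) (DMul p q)))"

definition dp_quad :: "nat \<Rightarrow> (nat \<Rightarrow> dpoly) \<Rightarrow> dpoly" where
  "dp_quad n f = DSum (Suc n) (\<lambda>a. DSum (Suc (n - a)) (\<lambda>b. dp_density a (f b) (f (n - a - b))))"

definition dp_Jpsi :: "(nat \<Rightarrow> dpoly) \<Rightarrow> nat \<Rightarrow> dpoly" where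
  "dp_Jpsi f n = DSum (Suc n) (\<lambda>a. dp_J (eps_rev a) (N - a) (f (n - a)))"

lemma dp_eval_deriv_density:
  "dp_eval (dp_deriv (dp_density a p q)) J =
     dp_eval p J * dp_eval (dp_J (eps_rev a) (N - a) q) J
     + eps_rev a / 8 * (dp_eval (dp_deriv p) J * dp_eval (dp_deriv (dp_deriv q)) J
                        - dp_eval (dp_deriv q) J * dp_eval (dp_deriv (dp_deriv p)) J)
     + dp_eval (dp_field (N - a)) J / 2 * (dp_eval (dp_deriv p) J * dp_eval q J - dp_eval (dp_deriv q) J * dp_eval p J)"
  by (simp add: dp_density_def dp_eval_J algebra_simps)

lemma dp_eval_deriv_quad:
  "dp_eval (dp_deriv (dp_quad n f)) J = (\<Sum>b\<le>n. dp_eval (f b) J * dp_eval (dp_Jpsi f (n - b)) J)"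
proof -
  define v where "v b = dp_eval (f b) J" for b
  define Jf where "Jf a c = dp_eval (dp_J (eps_rev a) (N - a) (f c)) J" for a c
  have antidiagonal: "(\<Sum>b\<le>m. dp_eval (dp_deriv (dp_density a (f b) (f (m - b)))) J)
      = (\<Sum>b\<le>m. v b * Jf a (m - b))" for a m
    using sum_antidiagonal_antisym[of "\<lambda>b c. dp_eval (dp_deriv (f b)) J * dp_eval (dp_deriv (dp_deriv (f c))) J" m]
      sum_antidiagonal_antisym[of "\<lambda>b c. dp_eval (dp_deriv (f b)) J * dp_eval (f c) J" m]
    by (simp add: dp_eval_deriv_density sum.distrib v_def Jf_def flip: sum_distrib_left sum_divide_distrib)
  have "dp_eval (dp_deriv (dp_quad n f)) J = (\<Sum>a\<le>n. \<Sum>b\<le>n - a. v b * Jf a (n - a - b))"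
    unfolding dp_quad_def dp_deriv.simps dp_eval.simps lessThan_Suc_atMost
    by (rule sum.cong[OF refl antidiagonal])
  also have "\<dots> = (\<Sum>b\<le>n. \<Sum>a\<le>n - b. v b * Jf a (n - a - b))"
    by (rule sum_triangle_swap)
  also have "\<dots> = (\<Sum>b\<le>n. v b * dp_eval (dp_Jpsi f (n - b)) J)"
    by (simp add: dp_Jpsi_def Jf_def lessThan_Suc_atMost sum_distrib_left add.commute)
  finally show ?thesis by (simp add: v_def)
qed

lemma dp_wf_quad [simp]: "(\<And>j. dp_wf (f j)) \<Longrightarrow> dp_wf (dp_quad n f)"
  by (simp add: dp_quad_def dp_density_def)

lemma dp_eval_quad_split:
  assumes n: "1 \<le> n"
  shows "dp_eval (dp_quad n f) J = dp_eval (dp_quad n (\<lambda>j. if j < n then f j else DConst 0)) J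
           + J N 0 * dp_eval (f 0) J * dp_eval (f n) J"
proof -
  define g where "g j = (if j < n then f j else DConst 0)" for j
  define X where "X = 1/2 * J N 0 * dp_eval (f 0) J * dp_eval (f n) J"
  have top_terms: "dp_eval (dp_density a (f b) (f (n - a - b))) J
      = dp_eval (dp_density a (g b) (g (n - a - b))) J
        + (if b = 0 then if a = 0 then X else 0 else 0) + (if b = n - a then if a = 0 then X else 0 else 0)"
    if "a \<le> n" "b \<le> n - a" for a b
  proof (cases "a = 0")
    case True
    then show ?thesis
      using that n N_pos by (auto simp: dp_density_def eps_rev_def eps_N dp_field_def g_def X_def)
  next
    case False
    then have "b < n" "n - a - b < n" using that n by auto
    then show ?thesis using False by (simp add: g_def)
  qed
  have "dp_eval (dp_quad n f) J = (\<Sum>a\<le>n. \<Sum>b\<le>n - a. dp_eval (dp_density a (f b) (f (n - a - b))) J)"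
    by (simp add: dp_quad_def lessThan_Suc_atMost)
  also have "\<dots> = (\<Sum>a\<le>n. \<Sum>b\<le>n - a. dp_eval (dp_density a (g b) (g (n - a - b))) J
      + (if b = 0 then if a = 0 then X else 0 else 0) + (if b = n - a then if a = 0 then X else 0 else 0))"
    by (intro sum.cong refl top_terms) auto
  also have "\<dots> = dp_eval (dp_quad n g) J + 2 * X"
    by (simp add: dp_quad_def lessThan_Suc_atMost sum.distrib flip: sum_distrib_left)
  finally show ?thesis by (simp add: g_def[abs_def] X_def)
qed

text \<open>By dp_eval_quad_split and u_N \<psi>_0^2 = 1, this choice of \<psi>_n makes the \<lambda>^n-coefficient
  of H(\<lambda>)(\<psi>, \<psi>) vanish for n \<ge> 1.\<close>

function psi :: "nat \<Rightarrow> dpoly" where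
  "psi n = (if n = 0 then DInvSqrt
            else DMul (DConst (-1)) (DMul DInvSqrt (dp_quad n (\<lambda>j. if j < n then psi j else DConst 0))))"
  by auto
termination by (relation "Wellfounded.measure id") auto

declare psi.simps [simp del]

lemma psi_0: "psi 0 = DInvSqrt"
  by (simp add: psi.simps)

lemma dp_wf_psi [simp]: "dp_wf (psi n)"
  by (induct n rule: less_induct) (subst psi.simps; simp)

lemma dp_eval_quad_psi:
  assumes pos: "0 < J N 0"
  shows "dp_eval (dp_quad n psi) J = (if n = 0 then 1/2 else 0)"
proof -
  have sq: "J N 0 * (1 / sqrt (J N 0) * (1 / sqrt (J N 0))) = 1"
    using pos by (simp add: field_simps)
  show ?thesis
  proof (cases "n = 0")
    case True
    then show ?thesis
      using sq N_pos by (simp add: dp_quad_def dp_density_def eps_rev_def eps_N dp_field_def psi_0)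
  next
    case False
    define w where "w = dp_eval (dp_quad n (\<lambda>j. if j < n then psi j else DConst 0)) J"
    have "dp_eval (psi n) J = - (1 / sqrt (J N 0) * w)"
      using False by (subst psi.simps) (simp add: w_def)
    then have "dp_eval (dp_quad n psi) J = w * (1 - J N 0 * (1 / sqrt (J N 0) * (1 / sqrt (J N 0))))"
      using dp_eval_quad_split[of n psi J] False by (simp add: psi_0 w_def algebra_simps)
    then show ?thesis using False sq by simp
  qed
qed

lemma dp_eval_Jpsi_psi:
  assumes adm: "admissible N u"
  shows "dp_eval (dp_Jpsi psi n) (jet_of u x) = 0"
proof (rule convolution_eq_0_imp_eq_0)
  have pos: "0 < jet_of u y N 0" for y
    using adm by (simp add: admissible_def jet_of_def)
  show "dp_eval (psi 0) (jet_of u x) \<noteq> 0"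
    using pos[of x] by (simp add: psi_0)
  fix m
  have "dp_fun u (dp_deriv (dp_quad m psi)) = deriv (dp_fun u (dp_quad m psi))"
    by (simp add: deriv_dp_fun[OF adm])
  also have "dp_fun u (dp_quad m psi) = (\<lambda>y. if m = 0 then 1/2 else 0)"
    by (simp add: dp_fun_def ev_def dp_eval_quad_psi pos)
  finally have "dp_fun u (dp_deriv (dp_quad m psi)) x = 0"
    by simp
  then show "(\<Sum>b\<le>m. dp_eval (psi b) (jet_of u x) * dp_eval (dp_Jpsi psi (m - b)) (jet_of u x)) = 0"
    by (simp add: dp_fun_def ev_def dp_eval_deriv_quad)
qed

definition gamma_seq :: "nat \<Rightarrow> dpoly" where
  "gamma_seq n = (if n < N - 1 then DConst 0 else psi (n - (N - 1)))"

lemma dp_wf_gamma_seq [simp]: "dp_wf (gamma_seq n)"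
  by (simp add: gamma_seq_def)

lemma dp_eval_J_0_0: "dp_eval (dp_J 0 0 p) J = 0"
  by (simp add: dp_J_def dp_field_def)

lemma sum_J_gamma_seq:
  "(\<Sum>i\<le>N. dp_eval (dp_J (eps i) i (gamma_seq (m + i))) J) = dp_eval (dp_Jpsi psi (Suc m)) J"
proof -
  define T where "T a = dp_eval (dp_J (eps_rev a) (N - a) (psi (Suc m - a))) J" for a
  have reflected: "dp_eval (dp_J (eps (N - a)) (N - a) (gamma_seq (m + (N - a)))) J
      = (if a \<in> {..Suc m} then T a else 0)" if "a \<le> N" for a
    using that N_pos
    by (auto simp: T_def gamma_seq_def eps_rev_def dp_J_def Suc_diff_le)
  have "(\<Sum>i\<le>N. dp_eval (dp_J (eps i) i (gamma_seq (m + i))) J)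
      = (\<Sum>a\<le>N. dp_eval (dp_J (eps (N - a)) (N - a) (gamma_seq (m + (N - a)))) J)"
    by (rule sum.reindex_bij_witness[where i="\<lambda>a. N - a" and j="\<lambda>a. N - a"]) auto
  also have "\<dots> = (\<Sum>a \<in> {..N} \<inter> {..Suc m}. T a)"
    unfolding sum.inter_restrict[OF finite_atMost] by (rule sum.cong[OF refl], rule reflected) simp
  also have "\<dots> = (\<Sum>a\<le>Suc m. T a)"
    by (intro sum.mono_neutral_left) (auto simp: T_def eps_rev_def dp_eval_J_0_0)
  finally show ?thesis
    by (simp add: dp_Jpsi_def T_def lessThan_Suc_atMost)
qed

lemma sum_J_gamma_seq_eq_0:
  "admissible N u \<Longrightarrow> (\<Sum>i\<le>N. dp_eval (dp_J (eps i) i (gamma_seq (m + i))) (jet_of u x)) = 0"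
  by (simp add: sum_J_gamma_seq dp_eval_Jpsi_psi)

lemma Jop_gamma_seq:
  "admissible N u \<Longrightarrow> i \<le> N \<Longrightarrow>
     Jop eps u i (dp_fun u (gamma_seq n)) x = dp_eval (dp_J (eps i) i (gamma_seq n)) (jet_of u x)"
  by (simp add: Jop_dp_fun) (simp add: dp_fun_def ev_def)

definition Gamma :: "nat \<Rightarrow> nat \<Rightarrow> jet \<Rightarrow> real" where
  "Gamma s i = dp_eval (gamma_seq (s + i - 1))"

definition K_dp :: "nat \<Rightarrow> nat \<Rightarrow> dpoly" where
  "K_dp s i = DMul (DConst (-1)) (DSum (N + 1 - i) (\<lambda>j. dp_J (eps (i + j)) (i + j) (gamma_seq (s + N + j))))"

definition K :: "nat \<Rightarrow> nat \<Rightarrow> jet \<Rightarrow> real" where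
  "K s i = dp_eval (K_dp s i)"

lemma ev_Gamma: "ev (Gamma s i) u = dp_fun u (gamma_seq (s + i - 1))"
  by (simp add: Gamma_def dp_fun_def)

lemma local_field_Gamma: "local_field N (Gamma s)"
  unfolding Gamma_def by (rule local_field_dp_eval) simp

lemma local_field_K: "local_field N (K s)"
  unfolding K_def by (rule local_field_dp_eval) (simp add: K_dp_def)

lemma gamma_chain_Gamma: "gamma_chain N eps Gamma"
  unfolding gamma_chain_def
proof (intro allI impI conjI ballI)
  fix u i assume "i \<in> {1..N}"
  then show "ev (Gamma 0 i) u = (\<lambda>x. if i = N then 1 / sqrt (u N x) else 0)"
    by (auto simp: ev_Gamma gamma_seq_def psi_0 dp_fun_InvSqrt)
next
  fix u s j
  show "ev (Gamma (Suc s) j) u = ev (Gamma s (Suc j)) u"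
    by (simp add: ev_Gamma)
next
  fix u s assume adm: "admissible N u"
  show "Jop eps u N (ev (Gamma (Suc s) N) u) = (\<lambda>x. - (\<Sum>i=1..N. Jop eps u (i - 1) (ev (Gamma s i) u) x))"
  proof
    fix x
    define c where "c i = dp_eval (dp_J (eps i) i (gamma_seq (s + i))) (jet_of u x)" for i
    have "(\<Sum>i=1..N. Jop eps u (i - 1) (ev (Gamma s i) u) x) = (\<Sum>i<N. c i)"
      unfolding sum_bounds_lt_plus1[symmetric] by (simp add: ev_Gamma c_def Jop_gamma_seq[OF adm])
    moreover have "(\<Sum>i<N. c i) + c N = 0"
      using sum_J_gamma_seq_eq_0[OF adm] by (simp add: c_def flip: lessThan_Suc_atMost)
    ultimately show "Jop eps u N (ev (Gamma (Suc s) N) u) x = - (\<Sum>i=1..N. Jop eps u (i - 1) (ev (Gamma s i) u) x)"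
      using N_pos by (simp add: ev_Gamma c_def Jop_gamma_seq[OF adm] add_eq_0_iff2)
  qed
qed

lemma ev_K:
  "ev (K s i) u x = - (\<Sum>j<N + 1 - i. dp_eval (dp_J (eps (i + j)) (i + j) (gamma_seq (s + N + j))) (jet_of u x))"
  by (simp add: K_def K_dp_def ev_def)

lemma K_chain_K: "K_chain N eps Gamma K"
  unfolding K_chain_def
proof (intro allI impI conjI ballI)
  fix u s i assume adm: "admissible N u" and i: "i \<in> {1..N}"
  show "ev (K s i) u = (\<lambda>x. - (\<Sum>j=1..N + 1 - i. Jop eps u (i + j - 1) (ev (Gamma (s + N) j) u) x))"
  proof
    fix x
    have "Jop eps u (i + j) (ev (Gamma (s + N) (Suc j)) u) x
        = dp_eval (dp_J (eps (i + j)) (i + j) (gamma_seq (s + N + j))) (jet_of u x)"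
      if "j < N + 1 - i" for j
      using that i by (simp add: ev_Gamma Jop_gamma_seq[OF adm])
    then show "ev (K s i) u x = - (\<Sum>j=1..N + 1 - i. Jop eps u (i + j - 1) (ev (Gamma (s + N) j) u) x)"
      unfolding sum_bounds_lt_plus1[symmetric] by (simp add: ev_K)
  qed
next
  fix u s assume adm: "admissible N u"
  define q where "q x m j = dp_eval (dp_J (eps j) j (gamma_seq m)) (jet_of u x)" for x m j
  \<comment> \<open>J_N^(-1) (K_s)_N = -g_(s+N)\<close>
  define w where "w = dp_fun u (DMul (DConst (-1)) (gamma_seq (s + N)))"
  have Jop_w: "Jop eps u i w x = - q x (s + N) i" if "i \<le> N" for i x
    using Jop_dp_fun[OF adm that, of "DMul (DConst (-1)) (gamma_seq (s + N))"]
    by (simp add: w_def q_def dp_fun_def ev_def dp_J_def algebra_simps)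
  have K: "ev (K s' i) u x = - (\<Sum>j<N + 1 - i. q x (s' + N + j) (i + j))" for s' i x
    by (simp add: ev_K q_def)
  show "\<exists>w. smooth_fun w \<and> Jop eps u N w = ev (K s N) u \<and>
          (\<forall>i\<in>{1..N}. ev (K (Suc s) i) u =
             (\<lambda>x. (if 2 \<le> i then ev (K s (i - 1)) u x else 0) - Jop eps u (i - 1) w x))"
  proof (intro exI conjI ballI)
    show "smooth_fun w"
      unfolding w_def by (rule smooth_dp_fun[OF adm]) simp
    show "Jop eps u N w = ev (K s N) u"
      by (simp add: fun_eq_iff Jop_w K)
    fix i assume i: "i \<in> {1..N}"
    show "ev (K (Suc s) i) u = (\<lambda>x. (if 2 \<le> i then ev (K s (i - 1)) u x else 0) - Jop eps u (i - 1) w x)"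
    proof
      fix x
      show "ev (K (Suc s) i) u x = (if 2 \<le> i then ev (K s (i - 1)) u x else 0) - Jop eps u (i - 1) w x"
      proof (cases "2 \<le> i")
        case True
        have "N + 1 - (i - 1) = Suc (N + 1 - i)" using True i by auto
        then have "ev (K s (i - 1)) u x = - (\<Sum>j<Suc (N + 1 - i). q x (s + N + j) (i - 1 + j))"
          by (simp only: K)
        also have "\<dots> = - (q x (s + N) (i - 1) + (\<Sum>j<N + 1 - i. q x (Suc s + N + j) (i + j)))"
          unfolding sum.lessThan_Suc_shift using True by simp
        finally show ?thesis using True i by (simp add: K Jop_w)
      next
        case False
        then have "i = 1" using i by auto
        have "q x (s + N) 0 + (\<Sum>j<N. q x (Suc s + N + j) (Suc j)) = (\<Sum>j\<le>N. q x (s + N + j) j)"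
          unfolding lessThan_Suc_atMost[symmetric] sum.lessThan_Suc_shift by simp
        also have "\<dots> = 0"
          unfolding q_def by (rule sum_J_gamma_seq_eq_0[OF adm])
        finally show ?thesis using \<open>i = 1\<close> by (simp add: K Jop_w add_eq_0_iff2)
      qed
    qed
  qed
qed

end

theorem mainTheorem11:
  fixes N :: nat and eps :: "nat \<Rightarrow> real"
  assumes "N \<ge> 1" and "eps 0 \<noteq> 0" and "eps N = 0"
  shows "\<exists>\<Gamma> K. gamma_chain N eps \<Gamma> \<and> K_chain N eps \<Gamma> K \<and>
           (\<forall>s. local_field N (\<Gamma> s)) \<and> (\<forall>s. local_field N (K s))"
proof -
  \<comment> \<open>eps 0 \<noteq> 0 (invertibility of J_0) is needed only for the negative flows.\<close>
  interpret harry_dym N eps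
    using assms by unfold_locales
  show ?thesis
    using gamma_chain_Gamma K_chain_K local_field_Gamma local_field_K by blast
qed

end
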